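(* Let $d,N\ge1$ and $P\in\{0,\dots,d-1\}$. Let $\mathcal H_N^{(P)}$ be the subspace of the bosonic $N$-particle space $\mathrm{Sym}^N(\mathbb C^d)$ spanned by the permanents $|m_0,\dots,m_{d-1}\rangle$ with $\sum_k m_k=N$ and $\sum_{k=0}^{d-1}k\,m_k\equiv P\pmod d$, and let $W$ be any Hermitian operator on $\mathcal H_N^{(P)}$. Define, for $m\in\mathbb R^d$, $$\mathcal F_p^{(P)}(m)=\min\{\langle\Psi|W|\Psi\rangle:\Psi\in\mathcal H_N^{(P)},\|\Psi\|=1,\langle\Psi|n_k|\Psi\rangle=m_k\ \forall k\},\qquad \mathcal F_e^{(P)}(m)=\min\{\mathrm{Tr}(\Gamma W):\Gamma\text{ density operator on }\mathcal H_N^{(P)},\ \mathrm{Tr}(\Gamma n_k)=m_k\ \forall k\},$$ with domain the set of $m$ for which the respective constraint set is nonempty. Then the domains of $\mathcal F_p^{(P)}$ and $\mathcal F_e^{(P)}$ coincide and both equal $$\mathrm{conv}\Big\{m\in\mathbb N_0^d:\ \sum_{k=0}^{d-1}m_k=N,\ \sum_{k=0}^{d-1}k\,m_k\equiv P\pmod d\Big\}.$$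
   Context: $b_k^\dagger,b_k$ are bosonic creation/annihilation operators for momentum mode $k\in\{0,\dots,d-1\}$ on a $d$-site periodic lattice, $n_k=b_k^\dagger b_k$ is the momentum-space number operator, and $|m_0,\dots,m_{d-1}\rangle\propto\prod_k(b_k^\dagger)^{m_k}|\mathrm{vac}\rangle$ is the normalized permanent with $m_k$ bosons in momentum $k$. *)

theory Defs
  imports "HOL-Analysis.Analysis"
begin

text \<open>These label the orthonormal permanent basis of H_N^(P).\<close>
definition configs :: "nat \<Rightarrow> nat \<Rightarrow> nat \<Rightarrow> (nat \<Rightarrow> nat) set" where
  "configs d N P = {m. (\<forall>k\<ge>d. m k = 0) \<and> (\<Sum>k<d. m k) = N \<and> (\<Sum>k<d. k * m k) mod d = P}"

text \<open>Matrix of the number operator n_k = b_k^dagger b_k in the permanent basis.\<close>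
definition numop :: "nat \<Rightarrow> (nat \<Rightarrow> nat) \<Rightarrow> (nat \<Rightarrow> nat) \<Rightarrow> complex" where
  "numop k a b = (if a = b then of_nat (a k) else 0)"

text \<open>Pure states: coefficient vectors Psi over the basis configs d N P.\<close>
definition norm_sq :: "(nat \<Rightarrow> nat) set \<Rightarrow> ((nat \<Rightarrow> nat) \<Rightarrow> complex) \<Rightarrow> real" where
  "norm_sq B \<Psi> = (\<Sum>a\<in>B. (cmod (\<Psi> a))\<^sup>2)"

definition expect :: "(nat \<Rightarrow> nat) set \<Rightarrow> ((nat \<Rightarrow> nat) \<Rightarrow> (nat \<Rightarrow> nat) \<Rightarrow> complex)
    \<Rightarrow> ((nat \<Rightarrow> nat) \<Rightarrow> complex) \<Rightarrow> complex" where
  "expect B A \<Psi> = (\<Sum>a\<in>B. \<Sum>b\<in>B. cnj (\<Psi> a) * A a b * \<Psi> b)"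

definition density_op :: "(nat \<Rightarrow> nat) set \<Rightarrow> ((nat \<Rightarrow> nat) \<Rightarrow> (nat \<Rightarrow> nat) \<Rightarrow> complex) \<Rightarrow> bool" where
  "density_op B \<Gamma> \<longleftrightarrow>
     (\<forall>a\<in>B. \<forall>b\<in>B. \<Gamma> a b = cnj (\<Gamma> b a)) \<and>
     (\<forall>v :: (nat \<Rightarrow> nat) \<Rightarrow> complex. 0 \<le> Re (expect B \<Gamma> v)) \<and>
     (\<Sum>a\<in>B. \<Gamma> a a) = 1"

definition trace_prod :: "(nat \<Rightarrow> nat) set \<Rightarrow> ((nat \<Rightarrow> nat) \<Rightarrow> (nat \<Rightarrow> nat) \<Rightarrow> complex)
    \<Rightarrow> ((nat \<Rightarrow> nat) \<Rightarrow> (nat \<Rightarrow> nat) \<Rightarrow> complex) \<Rightarrow> complex" where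
  "trace_prod B X Y = (\<Sum>a\<in>B. \<Sum>b\<in>B. X a b * Y b a)"

definition dom_pure :: "nat \<Rightarrow> nat \<Rightarrow> nat \<Rightarrow> (nat \<Rightarrow> real) set" where
  "dom_pure d N P = {m. (\<forall>k\<ge>d. m k = 0) \<and>
     (\<exists>\<Psi>. norm_sq (configs d N P) \<Psi> = 1 \<and>
          (\<forall>k<d. expect (configs d N P) (numop k) \<Psi> = complex_of_real (m k)))}"

definition dom_ens :: "nat \<Rightarrow> nat \<Rightarrow> nat \<Rightarrow> (nat \<Rightarrow> real) set" where
  "dom_ens d N P = {m. (\<forall>k\<ge>d. m k = 0) \<and>
     (\<exists>\<Gamma>. density_op (configs d N P) \<Gamma> \<and>
          (\<forall>k<d. trace_prod (configs d N P) \<Gamma> (numop k) = complex_of_real (m k)))}"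

text \<open>Convex hull of a set of points of nat => real (this function type has no
  real_vector instance in the library), written out as the set of finite convex
  combinations, i.e. the literal content of the convex hull.\<close>
definition conv_hull :: "(nat \<Rightarrow> real) set \<Rightarrow> (nat \<Rightarrow> real) set" where
  "conv_hull S = {x. \<exists>F u. finite F \<and> F \<noteq> {} \<and> F \<subseteq> S \<and> (\<forall>y\<in>F. 0 \<le> u y) \<and>
      sum u F = 1 \<and> x = (\<lambda>k. \<Sum>y\<in>F. u y * y k)}"

end

theory Submission
  imports Defs
begin

text \<open>The number operators are diagonal in the permanent basis, so both a normalised state
  \<open>\<Psi>\<close> and a density operator \<open>\<Gamma>\<close> enter the constraints only through their diagonal weights
  \<open>|\<Psi>_a|\<^sup>2\<close> resp. \<open>\<Gamma>_aa\<close>, which form a probability vector on the finite basis; conversely every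
  probability vector \<open>w\<close> arises, from \<open>\<Psi> = \<surd>w\<close> and from \<open>\<Gamma> = diag w\<close>. Hence both domains are
  the set of \<open>w\<close>-averages of the occupation vectors of the basis, i.e. their convex hull.
  None of this needs \<open>d, N \<ge> 1\<close> or \<open>P < d\<close>.\<close>

lemma configs_vanish: "\<forall>m\<in>configs d N P. \<forall>k\<ge>d. m k = 0"
  by (simp add: configs_def)

lemma finite_configs: "finite (configs d N P)"
proof (rule finite_subset)
  show "configs d N P \<subseteq> {m. \<forall>k. (k \<in> {..<d} \<longrightarrow> m k \<in> {..N}) \<and> (k \<notin> {..<d} \<longrightarrow> m k = 0)}"
  proof (intro subsetI CollectI allI conjI impI)
    fix m k assume m: "m \<in> configs d N P"
    show "m k = 0" if "k \<notin> {..<d}" using m that configs_vanish by simp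
    assume "k \<in> {..<d}"
    then have "m k \<le> (\<Sum>j<d. m j)" by (intro member_le_sum) auto
    with m show "m k \<in> {..N}" by (simp add: configs_def)
  qed
qed (rule finite_set_of_finite_funs; simp)

definition diag_mat :: "('a \<Rightarrow> complex) \<Rightarrow> 'a \<Rightarrow> 'a \<Rightarrow> complex" where
  "diag_mat f a b = (if a = b then f a else 0)"

lemma numop_eq_diag_mat: "numop k = diag_mat (\<lambda>a. of_nat (a k))"
  by (simp add: fun_eq_iff numop_def diag_mat_def)

lemma expect_diag_mat:
  assumes "finite B"
  shows "expect B (diag_mat f) \<Psi> = (\<Sum>a\<in>B. of_real ((cmod (\<Psi> a))\<^sup>2) * f a)"
  unfolding expect_def diag_mat_def
proof (rule sum.cong[OF refl])
  fix a assume "a \<in> B"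
  have "(\<Sum>b\<in>B. cnj (\<Psi> a) * (if a = b then f a else 0) * \<Psi> b) =
        (\<Sum>b\<in>B. if b = a then cnj (\<Psi> a) * f a * \<Psi> a else 0)"
    (is "?lhs = _") by (rule sum.cong) auto
  also have "\<dots> = cnj (\<Psi> a) * f a * \<Psi> a"
    using assms \<open>a \<in> B\<close> by simp
  also have "\<dots> = of_real ((cmod (\<Psi> a))\<^sup>2) * f a"
    unfolding complex_norm_square by (simp add: mult_ac)
  finally show "?lhs = of_real ((cmod (\<Psi> a))\<^sup>2) * f a" .
qed

lemma trace_prod_diag_mat:
  assumes "finite B"
  shows "trace_prod B \<Gamma> (diag_mat f) = (\<Sum>a\<in>B. \<Gamma> a a * f a)"
  unfolding trace_prod_def diag_mat_def
  using assms by (intro sum.cong refl) (simp add: if_distrib cong: if_cong)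

lemma expect_numop:
  assumes "finite B"
  shows "expect B (numop k) \<Psi> = of_real (\<Sum>a\<in>B. (cmod (\<Psi> a))\<^sup>2 * real (a k))"
  by (simp add: numop_eq_diag_mat expect_diag_mat[OF assms])

lemma trace_prod_numop:
  assumes "finite B"
  shows "trace_prod B \<Gamma> (numop k) = (\<Sum>a\<in>B. \<Gamma> a a * of_nat (a k))"
  by (simp add: numop_eq_diag_mat trace_prod_diag_mat[OF assms])

definition prob_weights :: "'a set \<Rightarrow> ('a \<Rightarrow> real) \<Rightarrow> bool" where
  "prob_weights B w \<longleftrightarrow> (\<forall>a\<in>B. 0 \<le> w a) \<and> sum w B = 1"

lemma pure_state_occupations_iff:
  assumes "finite B"
  shows "(\<exists>\<Psi>. norm_sq B \<Psi> = 1 \<and> (\<forall>k<d. expect B (numop k) \<Psi> = of_real (m k))) \<longleftrightarrow>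
         (\<exists>w. prob_weights B w \<and> (\<forall>k<d. m k = (\<Sum>a\<in>B. w a * real (a k))))"
proof
  assume "\<exists>\<Psi>. norm_sq B \<Psi> = 1 \<and> (\<forall>k<d. expect B (numop k) \<Psi> = of_real (m k))"
  then obtain \<Psi> where "norm_sq B \<Psi> = 1" "\<forall>k<d. expect B (numop k) \<Psi> = of_real (m k)"
    by blast
  moreover from this(2) have "\<forall>k<d. m k = (\<Sum>a\<in>B. (cmod (\<Psi> a))\<^sup>2 * real (a k))"
    by (simp only: expect_numop[OF assms] of_real_eq_iff eq_commute)
  ultimately show "\<exists>w. prob_weights B w \<and> (\<forall>k<d. m k = (\<Sum>a\<in>B. w a * real (a k)))"
    by (intro exI[of _ "\<lambda>a. (cmod (\<Psi> a))\<^sup>2"]) (simp add: prob_weights_def norm_sq_def)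
next
  assume "\<exists>w. prob_weights B w \<and> (\<forall>k<d. m k = (\<Sum>a\<in>B. w a * real (a k)))"
  then obtain w where w: "prob_weights B w" and m: "\<forall>k<d. m k = (\<Sum>a\<in>B. w a * real (a k))"
    by blast
  define \<Psi> where "\<Psi> a = complex_of_real (sqrt (w a))" for a
  have weight: "(cmod (\<Psi> a))\<^sup>2 = w a" if "a \<in> B" for a
    using w that by (simp add: \<Psi>_def prob_weights_def)
  have "norm_sq B \<Psi> = 1"
    using w by (simp add: norm_sq_def prob_weights_def weight cong: sum.cong)
  moreover have "\<forall>k<d. expect B (numop k) \<Psi> = of_real (m k)"
    using m by (simp add: expect_numop[OF assms] weight cong: sum.cong)
  ultimately show "\<exists>\<Psi>. norm_sq B \<Psi> = 1 \<and> (\<forall>k<d. expect B (numop k) \<Psi> = of_real (m k))"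
    by blast
qed

lemma expect_basis_vector:
  assumes "finite B" and "a \<in> B"
  shows "expect B A (\<lambda>x. if x = a then 1 else 0) = A a a"
proof -
  have "expect B A (\<lambda>x. if x = a then 1 else 0) =
        (\<Sum>x\<in>B. if x = a then (\<Sum>y\<in>B. if y = a then A a a else 0) else 0)"
    unfolding expect_def by (intro sum.cong refl) (auto intro: sum.cong)
  then show ?thesis using assms by simp
qed

lemma density_op_diag_real:
  assumes "density_op B \<Gamma>" and "a \<in> B"
  shows "\<Gamma> a a = of_real (Re (\<Gamma> a a))"
proof -
  have "\<Gamma> a a = cnj (\<Gamma> a a)"
    using assms unfolding density_op_def by blast
  then show ?thesis by (simp add: Reals_cnj_iff)
qed

lemma density_op_diag_nonneg:
  assumes "density_op B \<Gamma>" and "finite B" and "a \<in> B"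
  shows "0 \<le> Re (\<Gamma> a a)"
  using assms expect_basis_vector[OF assms(2,3), of \<Gamma>] unfolding density_op_def by metis

lemma density_op_diag_mat:
  assumes "finite B" and "prob_weights B w"
  shows "density_op B (diag_mat (\<lambda>a. of_real (w a)))"
proof -
  have "Re (expect B (diag_mat (\<lambda>a. of_real (w a))) v) = (\<Sum>a\<in>B. (cmod (v a))\<^sup>2 * w a)" for v
    by (simp add: expect_diag_mat[OF assms(1)])
  moreover have "(\<Sum>a\<in>B. (cmod (v a))\<^sup>2 * w a) \<ge> 0" for v
    using assms(2) by (intro sum_nonneg) (simp add: prob_weights_def)
  ultimately show ?thesis
    using assms(2) by (simp add: density_op_def diag_mat_def prob_weights_def flip: of_real_sum)
qed

lemma density_op_occupations_iff:
  assumes "finite B"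
  shows "(\<exists>\<Gamma>. density_op B \<Gamma> \<and> (\<forall>k<d. trace_prod B \<Gamma> (numop k) = of_real (m k))) \<longleftrightarrow>
         (\<exists>w. prob_weights B w \<and> (\<forall>k<d. m k = (\<Sum>a\<in>B. w a * real (a k))))"
proof
  assume "\<exists>\<Gamma>. density_op B \<Gamma> \<and> (\<forall>k<d. trace_prod B \<Gamma> (numop k) = of_real (m k))"
  then obtain \<Gamma> where \<Gamma>: "density_op B \<Gamma>" and m: "\<forall>k<d. trace_prod B \<Gamma> (numop k) = of_real (m k)"
    by blast
  have diag: "\<Gamma> a a = of_real (Re (\<Gamma> a a))" if "a \<in> B" for a
    using density_op_diag_real[OF \<Gamma> that] .
  have "of_real (\<Sum>a\<in>B. Re (\<Gamma> a a)) = (\<Sum>a\<in>B. \<Gamma> a a)"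
    unfolding of_real_sum using diag by (intro sum.cong refl) (rule sym)
  also have "\<dots> = 1"
    using \<Gamma> unfolding density_op_def by blast
  finally have "prob_weights B (\<lambda>a. Re (\<Gamma> a a))"
    using density_op_diag_nonneg[OF \<Gamma> assms] by (simp only: of_real_eq_1_iff prob_weights_def) blast
  moreover have "trace_prod B \<Gamma> (numop k) = of_real (\<Sum>a\<in>B. Re (\<Gamma> a a) * real (a k))" for k
    unfolding trace_prod_numop[OF assms] of_real_sum
    by (intro sum.cong refl) (metis diag of_real_mult of_real_of_nat_eq)
  with m have "\<forall>k<d. m k = (\<Sum>a\<in>B. Re (\<Gamma> a a) * real (a k))"
    by (simp only: of_real_eq_iff eq_commute)
  ultimately show "\<exists>w. prob_weights B w \<and> (\<forall>k<d. m k = (\<Sum>a\<in>B. w a * real (a k)))"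
    by blast
next
  assume "\<exists>w. prob_weights B w \<and> (\<forall>k<d. m k = (\<Sum>a\<in>B. w a * real (a k)))"
  then obtain w where w: "prob_weights B w" and m: "\<forall>k<d. m k = (\<Sum>a\<in>B. w a * real (a k))"
    by blast
  have "\<forall>k<d. trace_prod B (diag_mat (\<lambda>a. of_real (w a))) (numop k) = of_real (m k)"
    using m by (simp add: trace_prod_numop[OF assms] diag_mat_def)
  with density_op_diag_mat[OF assms w]
  show "\<exists>\<Gamma>. density_op B \<Gamma> \<and> (\<forall>k<d. trace_prod B \<Gamma> (numop k) = of_real (m k))"
    by blast
qed

definition occupation_averages :: "(nat \<Rightarrow> nat) set \<Rightarrow> (nat \<Rightarrow> real) set" where
  "occupation_averages B = {(\<lambda>k. \<Sum>a\<in>B. w a * real (a k)) | w. prob_weights B w}"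

lemma mem_occupation_averages_iff:
  assumes "\<forall>a\<in>B. \<forall>k\<ge>d. a k = 0"
  shows "m \<in> occupation_averages B \<longleftrightarrow>
         (\<forall>k\<ge>d. m k = 0) \<and> (\<exists>w. prob_weights B w \<and> (\<forall>k<d. m k = (\<Sum>a\<in>B. w a * real (a k))))"
proof -
  have tail: "(\<Sum>a\<in>B. w a * real (a k)) = 0" if "d \<le> k" for w k
    using assms that by (intro sum.neutral) simp
  have "m = (\<lambda>k. \<Sum>a\<in>B. w a * real (a k)) \<longleftrightarrow>
        (\<forall>k\<ge>d. m k = 0) \<and> (\<forall>k<d. m k = (\<Sum>a\<in>B. w a * real (a k)))" for w
  proof
    assume "(\<forall>k\<ge>d. m k = 0) \<and> (\<forall>k<d. m k = (\<Sum>a\<in>B. w a * real (a k)))"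
    then show "m = (\<lambda>k. \<Sum>a\<in>B. w a * real (a k))"
      using tail by (intro ext) (metis not_le)
  qed (simp add: tail)
  then show ?thesis
    unfolding occupation_averages_def by blast
qed

lemma dom_pure_eq_occupation_averages: "dom_pure d N P = occupation_averages (configs d N P)"
  unfolding dom_pure_def pure_state_occupations_iff[OF finite_configs]
    mem_occupation_averages_iff[OF configs_vanish, symmetric]
  by simp

lemma dom_ens_eq_occupation_averages: "dom_ens d N P = occupation_averages (configs d N P)"
  unfolding dom_ens_def density_op_occupations_iff[OF finite_configs]
    mem_occupation_averages_iff[OF configs_vanish, symmetric]
  by simp

lemma conv_hull_finite:
  assumes "finite S"
  shows "conv_hull S = {(\<lambda>k. \<Sum>y\<in>S. u y * y k) | u. prob_weights S u}"
proof (intro set_eqI iffI)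
  fix x assume "x \<in> conv_hull S"
  then obtain F u where F: "finite F" "F \<subseteq> S" and u: "\<forall>y\<in>F. 0 \<le> u y" "sum u F = 1"
    and x: "x = (\<lambda>k. \<Sum>y\<in>F. u y * y k)"
    unfolding conv_hull_def by blast
  define u' where "u' y = (if y \<in> F then u y else 0)" for y
  have restrict: "(\<Sum>y\<in>S. u' y * g y) = (\<Sum>y\<in>F. u y * g y)" for g :: "(nat \<Rightarrow> real) \<Rightarrow> real"
  proof -
    have "(\<Sum>y\<in>S. u' y * g y) = (\<Sum>y\<in>S. if y \<in> F then u y * g y else 0)"
      by (intro sum.cong) (auto simp: u'_def)
    also have "\<dots> = (\<Sum>y\<in>F. u y * g y)"
      using F(2) by (simp add: sum.inter_restrict[OF assms, symmetric] Int_absorb1)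
    finally show ?thesis .
  qed
  have "sum u' S = 1" and "x = (\<lambda>k. \<Sum>y\<in>S. u' y * y k)"
    using u x restrict[of "\<lambda>_. 1"] restrict[of "\<lambda>y. y _"] by simp_all
  moreover have "\<forall>y\<in>S. 0 \<le> u' y"
    using u by (simp add: u'_def)
  ultimately show "x \<in> {(\<lambda>k. \<Sum>y\<in>S. u y * y k) | u. prob_weights S u}"
    unfolding prob_weights_def by blast
next
  fix x assume "x \<in> {(\<lambda>k. \<Sum>y\<in>S. u y * y k) | u. prob_weights S u}"
  then show "x \<in> conv_hull S"
    using assms unfolding conv_hull_def prob_weights_def by fastforce
qed

lemma conv_hull_image:
  assumes "finite B" and "inj_on f B"
  shows "conv_hull (f ` B) = {(\<lambda>k. \<Sum>a\<in>B. w a * f a k) | w. prob_weights B w}"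
proof -
  have reindex: "prob_weights (f ` B) u \<longleftrightarrow> prob_weights B (u \<circ> f)"
    "(\<lambda>k. \<Sum>y\<in>f ` B. u y * y k) = (\<lambda>k. \<Sum>a\<in>B. (u \<circ> f) a * f a k)" for u
    using assms(2) by (simp_all add: prob_weights_def sum.reindex)
  have "\<exists>u. prob_weights B (u \<circ> f) \<and> (\<lambda>k. \<Sum>a\<in>B. w a * f a k) = (\<lambda>k. \<Sum>a\<in>B. (u \<circ> f) a * f a k)"
    if "prob_weights B w" for w
  proof -
    have agree: "w (inv_into B f (f a)) = w a" if "a \<in> B" for a
      using assms(2) that by simp
    show ?thesis
      using that by (intro exI[of _ "w \<circ> inv_into B f"])
        (simp add: prob_weights_def agree cong: sum.cong)
  qed
  then show ?thesis
    unfolding conv_hull_finite[OF finite_imageI[OF assms(1)]] reindex by blast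
qed

lemma occupation_averages_eq_conv_hull:
  assumes "finite B"
  shows "occupation_averages B = conv_hull ((\<lambda>m k. real (m k)) ` B)"
proof -
  have "inj_on (\<lambda>m k. real (m k)) B"
    by (intro inj_onI) (simp add: fun_eq_iff)
  then show ?thesis
    by (simp add: occupation_averages_def conv_hull_image[OF assms])
qed

theorem theorem3p2:
  fixes d N P :: nat
  assumes "1 \<le> d" and "1 \<le> N" and "P < d"
  shows "dom_pure d N P = dom_ens d N P \<and>
         dom_ens d N P = conv_hull ((\<lambda>m k. real (m k)) ` configs d N P)"
  using dom_pure_eq_occupation_averages dom_ens_eq_occupation_averages
    occupation_averages_eq_conv_hull[OF finite_configs]
  by simp

end
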